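(* For all real $0\le a\le b\le 1$ and all $\epsilon\in(0,\tfrac12)$, $$\frac{(\sqrt b+\sqrt a)^{2(1+\epsilon)}+(\sqrt b-\sqrt a)^{2(1+\epsilon)}}{2}-a^{1+\epsilon}-b^{1+\epsilon}\ge (b^\epsilon-a^\epsilon)a.$$ *)

theory Defs
  imports Complex_Main
begin

end

theory Submission
  imports Defs "HOL-Analysis.Analysis"
begin

text \<open>With \<open>u = (\<surd>b + \<surd>a)\<^sup>2\<close> and \<open>v = (\<surd>b - \<surd>a)\<^sup>2\<close> we have \<open>(u + v) / 2 = a + b\<close>, so
  convexity of \<open>x powr (1 + \<epsilon>)\<close> bounds the mean of the two large powers from below by
  \<open>(a + b) powr (1 + \<epsilon>) = (a + b) (a + b) powr \<epsilon> \<ge> (a + b) b powr \<epsilon>\<close>.\<close>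

lemma powr_half_le:
  fixes u p :: real
  assumes "1 \<le> p" "0 \<le> u"
  shows "(u / 2) powr p \<le> u powr p / 2"
proof -
  have "2 = 2 powr (1::real)" by simp
  also have "\<dots> \<le> 2 powr p" using assms(1) by (intro powr_mono) auto
  finally have "u powr p / 2 powr p \<le> u powr p / 2"
    by (intro divide_left_mono) auto
  then show ?thesis using assms(2) by (simp add: powr_divide)
qed

lemma powr_midpoint_le:
  fixes u v p :: real
  assumes "1 \<le> p" "0 \<le> u" "0 \<le> v"
  shows "((u + v) / 2) powr p \<le> (u powr p + v powr p) / 2"
proof -
  consider "u = 0" | "v = 0" | "0 < u" "0 < v" using assms by linarith
  then show ?thesis
  proof cases
    case 1
    then show ?thesis using powr_half_le[OF assms(1,3)] by simp
  next
    case 2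
    then show ?thesis using powr_half_le[OF assms(1,2)] by simp
  next
    case 3
    then have "((1 - 1/2) *\<^sub>R u + (1/2) *\<^sub>R v) powr p \<le> (1 - 1/2) * u powr p + (1/2) * v powr p"
      by (intro convex_onD[OF powr_convex[OF assms(1)]]) auto
    then show ?thesis by (simp add: field_simps)
  qed
qed

lemma add_powr_one_plus_ge:
  fixes a b e :: real
  assumes "0 \<le> a" "0 \<le> b" "0 \<le> e"
  shows "b powr (1 + e) + a * b powr e \<le> (a + b) powr (1 + e)"
proof -
  have "b powr (1 + e) + a * b powr e = (a + b) * b powr e"
    using assms(2) by (simp add: powr_add algebra_simps)
  also have "\<dots> \<le> (a + b) * (a + b) powr e"
    using assms by (intro mult_left_mono powr_mono2) auto
  also have "\<dots> = (a + b) powr (1 + e)"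
    using assms by (simp add: powr_add)
  finally show ?thesis .
qed

lemma powr_double_exponent:
  fixes x p :: real
  assumes "0 \<le> x"
  shows "x powr (2 * p) = (x\<^sup>2) powr p"
  using assms by (simp flip: powr_powr)

theorem mainTheorem6:
  fixes a b \<epsilon> :: real
  assumes "0 \<le> a" "a \<le> b" "b \<le> 1" "0 < \<epsilon>" "\<epsilon> < 1/2"
  shows "((sqrt b + sqrt a) powr (2 * (1 + \<epsilon>)) + (sqrt b - sqrt a) powr (2 * (1 + \<epsilon>))) / 2
           - a powr (1 + \<epsilon>) - b powr (1 + \<epsilon>) \<ge> (b powr \<epsilon> - a powr \<epsilon>) * a"
proof -
  define p where "p = 1 + \<epsilon>"
  define u where "u = (sqrt b + sqrt a)\<^sup>2"
  define v where "v = (sqrt b - sqrt a)\<^sup>2"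
  have "0 \<le> sqrt b + sqrt a" "0 \<le> sqrt b - sqrt a" using assms(1,2) by simp_all
  then have powers: "(sqrt b + sqrt a) powr (2 * p) = u powr p"
                    "(sqrt b - sqrt a) powr (2 * p) = v powr p"
    unfolding u_def v_def by (simp_all add: powr_double_exponent)
  have "a + b = (u + v) / 2"
    unfolding u_def v_def using assms(1,2) by (simp add: power2_eq_square algebra_simps)
  also have "\<dots> powr p \<le> (u powr p + v powr p) / 2"
    using assms(4) unfolding p_def u_def v_def by (intro powr_midpoint_le) auto
  finally have "(a + b) powr p \<le> (u powr p + v powr p) / 2" .
  moreover have "b powr p + a * b powr \<epsilon> \<le> (a + b) powr p"
    unfolding p_def using assms by (intro add_powr_one_plus_ge) auto
  moreover have "a powr p = a * a powr \<epsilon>"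
    unfolding p_def using assms(1) by (simp add: powr_add)
  ultimately show ?thesis
    using powers unfolding p_def by (simp add: algebra_simps)
qed

end
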